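(* Let $T=2k$ with $k\ge 1$ an integer. Then every word $w=s_1\cdots s_T\in\Omega_T$ satisfies $2x_{12}(w)+x_{13}(w)+x_{32}(w)\ge k-1$. Moreover, if $s_T=2$, then $2x_{12}(w)+x_{13}(w)+x_{32}(w)> k-1$.
   Context: $\Omega_T$ is the set of words $s_1\cdots s_T$ over $\{1,2,3\}$ with $s_l\ne s_{l+1}$ for all $l$; for $i\ne j$, $x_{ij}(w)$ is the number of $l\in\{1,\dots,T-1\}$ with $s_ls_{l+1}=ij$. *)

theory Defs
  imports Main
begin

text \<open>Words s_1...s_T are lists w of length T with s_l = w ! (l-1).\<close>

definition Omega :: "nat \<Rightarrow> nat list set" where
  "Omega T = {w. length w = T \<and> set w \<subseteq> {1,2,3} \<and>
                 (\<forall>l. Suc l < T \<longrightarrow> w ! l \<noteq> w ! Suc l)}"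

definition x :: "nat \<Rightarrow> nat \<Rightarrow> nat list \<Rightarrow> nat" where
  "x i j w = card {l. Suc l < length w \<and> w ! l = i \<and> w ! Suc l = j}"

end

theory Submission
  imports Defs
begin

text \<open>Give the letters the potential \<open>\<psi>(1) = 0, \<psi>(3) = 1, \<psi>(2) = 2\<close>. For every transition
  \<open>ab\<close> with \<open>a \<noteq> b\<close>, twice its weight in \<open>2x\<^sub>1\<^sub>2 + x\<^sub>1\<^sub>3 + x\<^sub>3\<^sub>2\<close> is at least \<open>1 + \<psi>(b) - \<psi>(a)\<close>.
  Telescoping over the \<open>T - 1\<close> transitions of a word gives
  \<open>2(2x\<^sub>1\<^sub>2 + x\<^sub>1\<^sub>3 + x\<^sub>3\<^sub>2) \<ge> T - 1 + \<psi>(s\<^sub>T) - \<psi>(s\<^sub>1) \<ge> T - 3\<close>, and \<open>\<ge> T - 1\<close> when \<open>s\<^sub>T = 2\<close>;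
  for \<open>T = 2k\<close> integrality then yields \<open>k - 1\<close> resp. \<open>k\<close>.\<close>

definition pair_weight :: "nat \<Rightarrow> nat \<Rightarrow> nat" where
  "pair_weight a b =
     (if a = 1 \<and> b = 2 then 2 else if a = 1 \<and> b = 3 then 1
      else if a = 3 \<and> b = 2 then 1 else 0)"

definition potential :: "nat \<Rightarrow> nat" where
  "potential a = (if a = 1 then 0 else if a = 3 then 1 else 2)"

lemma x_eq_sum:
  "x i j w = (\<Sum>l<length w - 1. if w ! l = i \<and> w ! Suc l = j then 1 else 0)"
proof -
  have "{l. Suc l < length w \<and> w ! l = i \<and> w ! Suc l = j}
        = {l \<in> {..<length w - 1}. w ! l = i \<and> w ! Suc l = j}" by auto
  then show ?thesis unfolding x_def by (simp add: sum.If_cases Int_def)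
qed

lemma weighted_count_eq_sum_pair_weight:
  "2 * x 1 2 w + x 1 3 w + x 3 2 w = (\<Sum>l<length w - 1. pair_weight (w ! l) (w ! Suc l))"
  unfolding x_eq_sum
  by (simp add: pair_weight_def sum_distrib_left flip: sum.distrib) (rule sum.cong; auto)

lemma pair_weight_potential_step:
  assumes "a \<in> {1,2,3}" "b \<in> {1,2,3}" "a \<noteq> b"
  shows "1 + potential b \<le> 2 * pair_weight a b + potential a"
  using assms by (auto simp: pair_weight_def potential_def)

lemma potential_telescope:
  assumes letters: "set w \<subseteq> {1,2,3}"
    and adjacent_distinct: "\<And>l. Suc l < length w \<Longrightarrow> w ! l \<noteq> w ! Suc l"
    and "n < length w"
  shows "n + potential (w ! n) \<le> 2 * (\<Sum>l<n. pair_weight (w ! l) (w ! Suc l)) + potential (w ! 0)"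
  using \<open>n < length w\<close>
proof (induction n)
  case 0
  then show ?case by simp
next
  case (Suc n)
  have "w ! n \<in> {1,2,3}" "w ! Suc n \<in> {1,2,3}"
    using Suc.prems by (intro subsetD[OF letters] nth_mem; simp)+
  with adjacent_distinct[OF Suc.prems]
  have "1 + potential (w ! Suc n) \<le> 2 * pair_weight (w ! n) (w ! Suc n) + potential (w ! n)"
    by (intro pair_weight_potential_step)
  with Suc show ?case by simp
qed

theorem lemma3:
  fixes k T :: nat and w :: "nat list"
  assumes "k \<ge> 1" and "T = 2 * k" and "w \<in> Omega T"
  shows "2 * x 1 2 w + x 1 3 w + x 3 2 w \<ge> k - 1 \<and>
         (last w = 2 \<longrightarrow> 2 * x 1 2 w + x 1 3 w + x 3 2 w > k - 1)"
proof -
  define S where "S = 2 * x 1 2 w + x 1 3 w + x 3 2 w"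
  have len: "length w = T" and letters: "set w \<subseteq> {1,2,3}"
    and distinct: "\<And>l. Suc l < length w \<Longrightarrow> w ! l \<noteq> w ! Suc l"
    using assms(3) unfolding Omega_def by auto
  have "S = (\<Sum>l<T - 1. pair_weight (w ! l) (w ! Suc l))"
    unfolding S_def weighted_count_eq_sum_pair_weight len ..
  then have "T - 1 + potential (w ! (T - 1)) \<le> 2 * S + potential (w ! 0)"
    using potential_telescope[OF letters distinct, of "T - 1"] assms(1,2) len by simp
  moreover have "potential (w ! 0) \<le> 2"
    by (simp add: potential_def)
  moreover have "last w = w ! (T - 1)"
    using len assms(1,2) by (subst last_conv_nth) auto
  ultimately show ?thesis
    using assms(1,2) unfolding S_def[symmetric] by (auto simp: potential_def split: if_splits)
qed

end
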